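(* Let $P$ be a poset, let $\Gamma$ and $\Gamma'$ be standard closure operators on $P$ with $\Gamma'\le\Gamma$, let $L_\Gamma$ and $L_{\Gamma'}$ be the complete lattices of $\Gamma$-closed and $\Gamma'$-closed subsets of $P$ (ordered by inclusion), and let $\eta:P\to L_\Gamma$, $\eta':P\to L_{\Gamma'}$ be the maps $p\mapsto p^\downarrow$. Then there is a unique completely join-preserving map $\phi:L_{\Gamma'}\to L_\Gamma$ with $\phi\circ\eta'=\eta$. Moreover, $L_\Gamma$ is a frame if and only if, for every standard closure operator $\Gamma'\le\Gamma$, the corresponding map $\phi$ preserves finite meets.
   Context: A closure operator on $P$ is a map $\Gamma:\wp(P)\to\wp(P)$ that is extensive, monotone and idempotent; it is standard if $\Gamma(\{p\})=p^\downarrow=\{q\in P:q\le p\}$ for all $p\in P$. A set $S$ is $\Gamma$-closed if $\Gamma(S)=S$. $\Gamma'\le\Gamma$ means $\Gamma'(S)\subseteq\Gamma(S)$ for all $S\subseteq P$. A frame is a complete lattice with $x\wedge\bigvee Y=\bigvee_{y\in Y}(x\wedge y)$. *)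

theory Defs
  imports Main
begin

definition closure_operator :: "('a set \<Rightarrow> 'a set) \<Rightarrow> bool" where
  "closure_operator \<Gamma> \<longleftrightarrow>
     (\<forall>S. S \<subseteq> \<Gamma> S) \<and> (\<forall>S T. S \<subseteq> T \<longrightarrow> \<Gamma> S \<subseteq> \<Gamma> T) \<and> (\<forall>S. \<Gamma> (\<Gamma> S) = \<Gamma> S)"

definition down :: "'a::order \<Rightarrow> 'a set" where
  "down p = {q. q \<le> p}"

definition standard_closure :: "('a::order set \<Rightarrow> 'a set) \<Rightarrow> bool" where
  "standard_closure \<Gamma> \<longleftrightarrow> closure_operator \<Gamma> \<and> (\<forall>p. \<Gamma> {p} = down p)"

definition closed_sets :: "('a set \<Rightarrow> 'a set) \<Rightarrow> 'a set set" where
  "closed_sets \<Gamma> = {S. \<Gamma> S = S}"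

definition is_lub :: "'a set set \<Rightarrow> 'a set set \<Rightarrow> 'a set \<Rightarrow> bool" where
  "is_lub L Y x \<longleftrightarrow> x \<in> L \<and> (\<forall>y\<in>Y. y \<subseteq> x) \<and> (\<forall>z\<in>L. (\<forall>y\<in>Y. y \<subseteq> z) \<longrightarrow> x \<subseteq> z)"

definition is_glb :: "'a set set \<Rightarrow> 'a set set \<Rightarrow> 'a set \<Rightarrow> bool" where
  "is_glb L Y x \<longleftrightarrow> x \<in> L \<and> (\<forall>y\<in>Y. x \<subseteq> y) \<and> (\<forall>z\<in>L. (\<forall>y\<in>Y. z \<subseteq> y) \<longrightarrow> z \<subseteq> x)"

definition lub :: "'a set set \<Rightarrow> 'a set set \<Rightarrow> 'a set" where
  "lub L Y = (THE x. is_lub L Y x)"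

definition glb :: "'a set set \<Rightarrow> 'a set set \<Rightarrow> 'a set" where
  "glb L Y = (THE x. is_glb L Y x)"

definition is_frame :: "'a set set \<Rightarrow> bool" where
  "is_frame L \<longleftrightarrow>
     (\<forall>Y\<subseteq>L. \<exists>x. is_lub L Y x) \<and> (\<forall>Y\<subseteq>L. \<exists>x. is_glb L Y x) \<and>
     (\<forall>x\<in>L. \<forall>Y\<subseteq>L. glb L {x, lub L Y} = lub L ((\<lambda>y. glb L {x, y}) ` Y))"

definition complete_join_hom :: "'a set set \<Rightarrow> 'b set set \<Rightarrow> ('a set \<Rightarrow> 'b set) \<Rightarrow> bool" where
  "complete_join_hom L1 L2 \<phi> \<longleftrightarrow>
     (\<forall>S\<in>L1. \<phi> S \<in> L2) \<and>
     (\<forall>Y\<subseteq>L1. \<forall>x. is_lub L1 Y x \<longrightarrow> is_lub L2 (\<phi> ` Y) (\<phi> x))"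

text \<open>\<phi> : L1 \<rightarrow> L2 preserves finite meets (including the empty meet, i.e. top).\<close>

definition finite_meet_preserving :: "'a set set \<Rightarrow> 'b set set \<Rightarrow> ('a set \<Rightarrow> 'b set) \<Rightarrow> bool" where
  "finite_meet_preserving L1 L2 \<phi> \<longleftrightarrow>
     (\<forall>Y\<subseteq>L1. finite Y \<longrightarrow> (\<forall>x. is_glb L1 Y x \<longrightarrow> is_glb L2 (\<phi> ` Y) (\<phi> x)))"

end

theory Submission
  imports Defs
begin

text \<open>Every \<Gamma>'-closed set S is the \<Gamma>'-join of the principal downsets below its elements, so a
  join-preserving \<phi> fixing principal downsets must send S to \<Gamma>(\<Union>(down ` S)) = \<Gamma> S; thus \<phi> is
  the restriction of \<Gamma>. In the lattice of \<Gamma>-closed sets meets are intersections and joins are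
  closures of unions, so the frame law says that \<Gamma> commutes with binary intersections of
  downsets. The smallest standard closure operator, downward closure, has all downsets as its
  closed sets; meet preservation for it is exactly that condition, and for a general \<Gamma>' it
  follows by induction over the finite family.\<close>

lemma closure_extensive: "closure_operator G \<Longrightarrow> S \<subseteq> G S"
  by (simp add: closure_operator_def)

lemma closure_mono: "closure_operator G \<Longrightarrow> S \<subseteq> T \<Longrightarrow> G S \<subseteq> G T"
  by (simp add: closure_operator_def)

lemma closure_idem: "closure_operator G \<Longrightarrow> G (G S) = G S"
  by (simp add: closure_operator_def)

lemma closure_in_closed_sets: "closure_operator G \<Longrightarrow> G S \<in> closed_sets G"
  by (simp add: closed_sets_def closure_idem)

lemma Inter_in_closed_sets:
  assumes "closure_operator G" "Y \<subseteq> closed_sets G"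
  shows "\<Inter>Y \<in> closed_sets G"
proof -
  have "G (\<Inter>Y) \<subseteq> y" if "y \<in> Y" for y
    using closure_mono[OF assms(1), of "\<Inter>Y" y] that assms(2)
    by (auto simp: closed_sets_def)
  then show ?thesis
    using closure_extensive[OF assms(1), of "\<Inter>Y"] by (auto simp: closed_sets_def)
qed

lemma is_glb_closed_sets_iff:
  assumes "closure_operator G" "Y \<subseteq> closed_sets G"
  shows "is_glb (closed_sets G) Y x \<longleftrightarrow> x = \<Inter>Y"
  using Inter_in_closed_sets[OF assms] unfolding is_glb_def
  by (metis Inter_greatest Inter_lower subset_antisym)

lemma is_lub_closed_sets_iff:
  assumes "closure_operator G"
  shows "is_lub (closed_sets G) Y x \<longleftrightarrow> x = G (\<Union>Y)"
proof
  assume lub: "is_lub (closed_sets G) Y x"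
  then have "G (\<Union>Y) \<subseteq> G x"
    by (intro closure_mono[OF assms]) (auto simp: is_lub_def)
  moreover have "G x = x"
    using lub by (simp add: is_lub_def closed_sets_def)
  moreover have "x \<subseteq> G (\<Union>Y)"
    using lub closure_in_closed_sets[OF assms] closure_extensive[OF assms, of "\<Union>Y"]
    unfolding is_lub_def by blast
  ultimately show "x = G (\<Union>Y)" by auto
next
  have "G (\<Union>Y) \<subseteq> z" if "z \<in> closed_sets G" "\<forall>y\<in>Y. y \<subseteq> z" for z
    using closure_mono[OF assms, of "\<Union>Y" z] that by (auto simp: closed_sets_def)
  moreover have "y \<subseteq> G (\<Union>Y)" if "y \<in> Y" for y
    using closure_extensive[OF assms, of "\<Union>Y"] that by auto
  ultimately show "x = G (\<Union>Y) \<Longrightarrow> is_lub (closed_sets G) Y x"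
    using closure_in_closed_sets[OF assms] unfolding is_lub_def by blast
qed

lemma glb_closed_sets:
  "closure_operator G \<Longrightarrow> Y \<subseteq> closed_sets G \<Longrightarrow> glb (closed_sets G) Y = \<Inter>Y"
  unfolding glb_def by (rule the_equality) (simp_all add: is_glb_closed_sets_iff)

lemma lub_closed_sets: "closure_operator G \<Longrightarrow> lub (closed_sets G) Y = G (\<Union>Y)"
  unfolding lub_def by (rule the_equality) (simp_all add: is_lub_closed_sets_iff)

lemma glb_closed_sets_pair:
  assumes "closure_operator G" "x \<in> closed_sets G" "y \<in> closed_sets G"
  shows "glb (closed_sets G) {x, y} = x \<inter> y"
proof -
  have "{x, y} \<subseteq> closed_sets G"
    using assms(2,3) by simp
  from glb_closed_sets[OF assms(1) this] show ?thesis
    by simp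
qed

lemma is_frame_closed_sets_iff:
  assumes G: "closure_operator G"
  shows "is_frame (closed_sets G) \<longleftrightarrow>
    (\<forall>x\<in>closed_sets G. \<forall>Y\<subseteq>closed_sets G. x \<inter> G (\<Union>Y) = G (x \<inter> \<Union>Y))"
proof -
  have "glb (closed_sets G) {x, lub (closed_sets G) Y} = x \<inter> G (\<Union>Y)"
    if "x \<in> closed_sets G" for x Y
    unfolding lub_closed_sets[OF G]
    by (rule glb_closed_sets_pair[OF G that closure_in_closed_sets[OF G]])
  moreover have "lub (closed_sets G) ((\<lambda>y. glb (closed_sets G) {x, y}) ` Y) = G (x \<inter> \<Union>Y)"
    if "x \<in> closed_sets G" "Y \<subseteq> closed_sets G" for x Y
  proof -
    have "(\<lambda>y. glb (closed_sets G) {x, y}) ` Y = (\<lambda>y. x \<inter> y) ` Y"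
      using glb_closed_sets_pair[OF G \<open>x \<in> closed_sets G\<close>] that(2) by (auto simp: subset_iff)
    then show ?thesis
      by (simp only: lub_closed_sets[OF G] Int_Union)
  qed
  moreover have "\<exists>x. is_lub (closed_sets G) Y x" "\<exists>x. is_glb (closed_sets G) Y' x"
    if "Y' \<subseteq> closed_sets G" for Y Y'
    using is_glb_closed_sets_iff[OF G that] is_lub_closed_sets_iff[OF G] by blast+
  ultimately show ?thesis
    unfolding is_frame_def by auto
qed

definition downset :: "'a::order set \<Rightarrow> bool" where
  "downset S \<longleftrightarrow> (\<forall>p\<in>S. \<forall>q. q \<le> p \<longrightarrow> q \<in> S)"

lemma downset_eq_Union_down: "downset S \<Longrightarrow> S = (\<Union>p\<in>S. down p)"
  by (auto simp: downset_def down_def)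

lemma standard_closure_closure_operator: "standard_closure G \<Longrightarrow> closure_operator G"
  by (simp add: standard_closure_def)

lemma down_in_closed_sets: "standard_closure G \<Longrightarrow> down p \<in> closed_sets G"
  by (metis closure_in_closed_sets standard_closure_def)

lemma closure_down: "standard_closure G \<Longrightarrow> G (down p) = down p"
  using down_in_closed_sets by (auto simp: closed_sets_def)

lemma downset_if_closed:
  assumes "standard_closure G" "S \<in> closed_sets G"
  shows "downset S"
  unfolding downset_def
proof (intro ballI allI impI)
  fix p q assume "p \<in> S" "q \<le> p"
  then have "q \<in> G {p}"
    using assms(1) by (simp add: standard_closure_def down_def)
  also have "G {p} \<subseteq> S"
    using closure_mono[OF standard_closure_closure_operator[OF assms(1)], of "{p}" S]
      \<open>p \<in> S\<close> assms(2) by (simp add: closed_sets_def)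
  finally show "q \<in> S" .
qed

lemma complete_join_hom_closure:
  assumes G: "closure_operator G" and G': "closure_operator G'" and le: "\<forall>S. G' S \<subseteq> G S"
  shows "complete_join_hom (closed_sets G') (closed_sets G) G"
  unfolding complete_join_hom_def
proof (intro conjI ballI allI impI)
  fix Y x assume "is_lub (closed_sets G') Y x"
  then have x: "x = G' (\<Union>Y)"
    using is_lub_closed_sets_iff[OF G'] by auto
  have "G x = G (\<Union>Y)"
    using closure_mono[OF G, of x "G (\<Union>Y)"] closure_mono[OF G, of "\<Union>Y" x]
      closure_idem[OF G] closure_extensive[OF G'] le x by auto
  moreover have "G (\<Union>(G ` Y)) = G (\<Union>Y)"
  proof
    have "\<Union>(G ` Y) \<subseteq> G (\<Union>Y)"
      using closure_mono[OF G] by (meson UN_least Union_upper)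
    then show "G (\<Union>(G ` Y)) \<subseteq> G (\<Union>Y)"
      using closure_mono[OF G] closure_idem[OF G] by metis
    have "\<Union>Y \<subseteq> \<Union>(G ` Y)"
      using closure_extensive[OF G] by blast
    then show "G (\<Union>Y) \<subseteq> G (\<Union>(G ` Y))"
      using closure_mono[OF G] by blast
  qed
  ultimately show "is_lub (closed_sets G) (G ` Y) (G x)"
    using is_lub_closed_sets_iff[OF G] by auto
qed (rule closure_in_closed_sets[OF G])

lemma complete_join_hom_unique:
  assumes G: "standard_closure G" and G': "standard_closure G'"
    and hom: "complete_join_hom (closed_sets G') (closed_sets G) \<psi>"
    and down: "\<forall>p. \<psi> (down p) = down p"
    and S: "S \<in> closed_sets G'"
  shows "\<psi> S = G S"
proof -
  have S_eq: "S = \<Union>(down ` S)"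
    using downset_eq_Union_down[OF downset_if_closed[OF G' S]] .
  have "G' (\<Union>(down ` S)) = S"
    using S S_eq by (simp add: closed_sets_def)
  then have "is_lub (closed_sets G') (down ` S) S"
    using is_lub_closed_sets_iff[OF standard_closure_closure_operator[OF G']] by blast
  moreover have "down ` S \<subseteq> closed_sets G'"
    using down_in_closed_sets[OF G'] by blast
  ultimately have "is_lub (closed_sets G) (\<psi> ` down ` S) (\<psi> S)"
    using hom unfolding complete_join_hom_def by blast
  moreover have "\<psi> ` down ` S = down ` S"
    using down by (simp add: image_image)
  ultimately have "\<psi> S = G (\<Union>(down ` S))"
    using is_lub_closed_sets_iff[OF standard_closure_closure_operator[OF G]] by simp
  with S_eq show ?thesis
    by simp
qed

lemma finite_meet_preserving_cong:
  assumes "\<And>S. S \<in> L1 \<Longrightarrow> \<phi> S = \<psi> S"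
  shows "finite_meet_preserving L1 L2 \<phi> \<longleftrightarrow> finite_meet_preserving L1 L2 \<psi>"
proof -
  have "\<phi> ` Y = \<psi> ` Y" "\<phi> x = \<psi> x" if "Y \<subseteq> L1" "is_glb L1 Y x" for Y x
    using that assms by (auto simp: is_glb_def)
  then show ?thesis
    unfolding finite_meet_preserving_def by metis
qed

lemma finite_meet_preserving_closure_iff:
  assumes G: "closure_operator G" and G': "closure_operator G'"
  shows "finite_meet_preserving (closed_sets G') (closed_sets G) G \<longleftrightarrow>
    (\<forall>Y\<subseteq>closed_sets G'. finite Y \<longrightarrow> G (\<Inter>Y) = \<Inter>(G ` Y))"
proof -
  have "G ` Y \<subseteq> closed_sets G" for Y
    using closure_in_closed_sets[OF G] by blast
  then show ?thesis
    unfolding finite_meet_preserving_def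
    using is_glb_closed_sets_iff[OF G] is_glb_closed_sets_iff[OF G'] by metis
qed

lemma finite_meet_preserving_iff_closure_Inter:
  assumes G: "standard_closure G" and G': "standard_closure G'"
    and hom: "complete_join_hom (closed_sets G') (closed_sets G) \<phi>"
    and down: "\<forall>p. \<phi> (down p) = down p"
  shows "finite_meet_preserving (closed_sets G') (closed_sets G) \<phi> \<longleftrightarrow>
    (\<forall>Y\<subseteq>closed_sets G'. finite Y \<longrightarrow> G (\<Inter>Y) = \<Inter>(G ` Y))"
proof -
  have "finite_meet_preserving (closed_sets G') (closed_sets G) \<phi> \<longleftrightarrow>
      finite_meet_preserving (closed_sets G') (closed_sets G) G"
    using complete_join_hom_unique[OF G G' hom down] by (rule finite_meet_preserving_cong)
  also have "\<dots> \<longleftrightarrow> (\<forall>Y\<subseteq>closed_sets G'. finite Y \<longrightarrow> G (\<Inter>Y) = \<Inter>(G ` Y))"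
    using finite_meet_preserving_closure_iff standard_closure_closure_operator G G' by blast
  finally show ?thesis .
qed

lemma downset_Inter: "\<forall>A\<in>Y. downset A \<Longrightarrow> downset (\<Inter>Y)"
  by (auto simp: downset_def)

lemma downset_Union: "\<forall>A\<in>Y. downset A \<Longrightarrow> downset (\<Union>Y)"
  by (auto simp: downset_def)

lemma closed_Int_closure_downset:
  assumes G: "standard_closure G" and frame: "is_frame (closed_sets G)"
    and x: "x \<in> closed_sets G" and B: "downset B"
  shows "x \<inter> G B = G (x \<inter> B)"
proof -
  have "down ` B \<subseteq> closed_sets G"
    using down_in_closed_sets[OF G] by blast
  then have "x \<inter> G (\<Union>(down ` B)) = G (x \<inter> \<Union>(down ` B))"
    using frame x is_frame_closed_sets_iff[OF standard_closure_closure_operator[OF G]] by blast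
  then show ?thesis
    using downset_eq_Union_down[OF B] by simp
qed

lemma is_frame_closed_sets_iff_closure_Int_downsets:
  assumes G: "standard_closure G"
  shows "is_frame (closed_sets G) \<longleftrightarrow>
    (\<forall>A B. downset A \<longrightarrow> downset B \<longrightarrow> G (A \<inter> B) = G A \<inter> G B)"
proof (intro iffI allI impI)
  have co: "closure_operator G"
    using standard_closure_closure_operator[OF G] .
  {
    fix A B :: "'a set"
    assume frame: "is_frame (closed_sets G)" and A: "downset A" and B: "downset B"
    have "G A \<inter> B \<subseteq> G (A \<inter> B)"
    proof
      fix b assume b: "b \<in> G A \<inter> B"
      then have "b \<in> down b \<inter> G A"
        by (simp add: down_def)
      also have "\<dots> = G (down b \<inter> A)"
        using closed_Int_closure_downset[OF G frame down_in_closed_sets[OF G] A] .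
      also have "\<dots> \<subseteq> G (A \<inter> B)"
        using b B by (intro closure_mono[OF co]) (auto simp: downset_def down_def)
      finally show "b \<in> G (A \<inter> B)" .
    qed
    then have "G (G A \<inter> B) \<subseteq> G (A \<inter> B)"
      using closure_mono[OF co] closure_idem[OF co] by metis
    moreover have "G A \<inter> G B = G (G A \<inter> B)"
      using closed_Int_closure_downset[OF G frame closure_in_closed_sets[OF co] B] .
    moreover have "G (A \<inter> B) \<subseteq> G A \<inter> G B"
      using closure_mono[OF co] by blast
    ultimately show "G (A \<inter> B) = G A \<inter> G B"
      by blast
  }
next
  assume meet: "\<forall>A B. downset A \<longrightarrow> downset B \<longrightarrow> G (A \<inter> B) = G A \<inter> G B"
  have "x \<inter> G (\<Union>Y) = G (x \<inter> \<Union>Y)" if x: "x \<in> closed_sets G" and Y: "Y \<subseteq> closed_sets G" for x Y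
  proof -
    have "downset x" "downset (\<Union>Y)"
      using downset_if_closed[OF G] downset_Union[of Y] x Y by blast+
    then have "G (x \<inter> \<Union>Y) = G x \<inter> G (\<Union>Y)"
      using meet by blast
    with x show ?thesis
      by (simp add: closed_sets_def)
  qed
  then show "is_frame (closed_sets G)"
    using is_frame_closed_sets_iff[OF standard_closure_closure_operator[OF G]] by blast
qed

lemma closure_Inter_downsets:
  assumes G: "closure_operator G"
    and meet: "\<And>A B. downset A \<Longrightarrow> downset B \<Longrightarrow> G (A \<inter> B) = G A \<inter> G B"
    and "finite Y" "\<forall>A\<in>Y. downset A"
  shows "G (\<Inter>Y) = \<Inter>(G ` Y)"
  using assms(3,4)
proof (induction Y rule: finite_induct)
  case empty
  show ?case
    using closure_extensive[OF G, of UNIV] by auto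
next
  case (insert A Y)
  then show ?case
    using meet[of A "\<Inter>Y"] downset_Inter[of Y] by simp
qed

definition down_closure :: "'a::order set \<Rightarrow> 'a set" where
  "down_closure S = (\<Union>p\<in>S. down p)"

lemma standard_closure_down_closure: "standard_closure down_closure"
  unfolding standard_closure_def closure_operator_def down_closure_def down_def
  by (auto intro: order_trans)

lemma down_closure_le:
  assumes "standard_closure G"
  shows "down_closure S \<subseteq> G S"
proof -
  have "down p \<subseteq> G S" if "p \<in> S" for p
    using closure_mono[OF standard_closure_closure_operator[OF assms], of "{p}" S] that assms
    by (simp add: standard_closure_def)
  then show ?thesis
    by (auto simp: down_closure_def)
qed

lemma closed_sets_down_closure: "closed_sets down_closure = {S. downset S}"
  by (auto simp: closed_sets_def down_closure_def downset_def down_def)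

lemma complete_join_hom_down_closure:
  "standard_closure G \<Longrightarrow> complete_join_hom (closed_sets down_closure) (closed_sets G) G"
  using complete_join_hom_closure standard_closure_closure_operator
    standard_closure_down_closure down_closure_le by blast

lemma finite_meet_preserving_if_frame:
  assumes G: "standard_closure G" and frame: "is_frame (closed_sets G)"
    and G': "standard_closure G'"
    and hom: "complete_join_hom (closed_sets G') (closed_sets G) \<phi>"
    and down: "\<forall>p. \<phi> (down p) = down p"
  shows "finite_meet_preserving (closed_sets G') (closed_sets G) \<phi>"
proof -
  have meet: "G (A \<inter> B) = G A \<inter> G B" if "downset A" "downset B" for A B
    using frame that is_frame_closed_sets_iff_closure_Int_downsets[OF G] by blast
  have "G (\<Inter>Y) = \<Inter>(G ` Y)" if "Y \<subseteq> closed_sets G'" "finite Y" for Y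
  proof -
    have "\<forall>A\<in>Y. downset A"
      using that(1) downset_if_closed[OF G'] by blast
    with that(2) show ?thesis
      using closure_Inter_downsets[OF standard_closure_closure_operator[OF G] meet] by blast
  qed
  then show ?thesis
    using finite_meet_preserving_iff_closure_Inter[OF G G' hom down] by blast
qed

lemma frame_if_finite_meet_preserving_down_closure:
  assumes G: "standard_closure G"
    and fmp: "finite_meet_preserving (closed_sets down_closure) (closed_sets G) G"
  shows "is_frame (closed_sets G)"
proof -
  have "\<forall>p. G (down p) = down p"
    using closure_down[OF G] by blast
  with fmp have Inter: "\<forall>Y\<subseteq>closed_sets down_closure. finite Y \<longrightarrow> G (\<Inter>Y) = \<Inter>(G ` Y)"
    using finite_meet_preserving_iff_closure_Inter[OF G standard_closure_down_closure
        complete_join_hom_down_closure[OF G]] by blast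
  have "G (A \<inter> B) = G A \<inter> G B" if "downset A" "downset B" for A B
    using Inter[rule_format, of "{A, B}"] that by (simp add: closed_sets_down_closure)
  then show ?thesis
    using is_frame_closed_sets_iff_closure_Int_downsets[OF G] by blast
qed

theorem proposition2p6:
  fixes \<Gamma> \<Gamma>' :: "'a::order set \<Rightarrow> 'a set"
  assumes "standard_closure \<Gamma>" and "standard_closure \<Gamma>'"
    and "\<forall>S. \<Gamma>' S \<subseteq> \<Gamma> S"
  shows "(\<exists>\<phi>. complete_join_hom (closed_sets \<Gamma>') (closed_sets \<Gamma>) \<phi>
              \<and> (\<forall>p. \<phi> (down p) = down p)
              \<and> (\<forall>\<psi>. complete_join_hom (closed_sets \<Gamma>') (closed_sets \<Gamma>) \<psi>
                      \<and> (\<forall>p. \<psi> (down p) = down p)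
                      \<longrightarrow> (\<forall>S\<in>closed_sets \<Gamma>'. \<psi> S = \<phi> S)))
       \<and> (is_frame (closed_sets \<Gamma>) \<longleftrightarrow>
           (\<forall>\<Gamma>''. standard_closure \<Gamma>'' \<and> (\<forall>S. \<Gamma>'' S \<subseteq> \<Gamma> S) \<longrightarrow>
              (\<forall>\<phi>. complete_join_hom (closed_sets \<Gamma>'') (closed_sets \<Gamma>) \<phi>
                    \<and> (\<forall>p. \<phi> (down p) = down p)
                    \<longrightarrow> finite_meet_preserving (closed_sets \<Gamma>'') (closed_sets \<Gamma>) \<phi>)))"
proof (intro conjI iffI allI impI)
  have "closure_operator \<Gamma>" "closure_operator \<Gamma>'"
    using assms(1,2) standard_closure_closure_operator by blast+
  then show "\<exists>\<phi>. complete_join_hom (closed_sets \<Gamma>') (closed_sets \<Gamma>) \<phi> \<and> (\<forall>p. \<phi> (down p) = down p)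
      \<and> (\<forall>\<psi>. complete_join_hom (closed_sets \<Gamma>') (closed_sets \<Gamma>) \<psi> \<and> (\<forall>p. \<psi> (down p) = down p)
           \<longrightarrow> (\<forall>S\<in>closed_sets \<Gamma>'. \<psi> S = \<phi> S))"
    using complete_join_hom_closure[OF _ _ assms(3)] closure_down[OF assms(1)]
      complete_join_hom_unique[OF assms(1,2)] by blast
next
  fix \<Gamma>'' \<phi>
  assume "is_frame (closed_sets \<Gamma>)" and "standard_closure \<Gamma>'' \<and> (\<forall>S. \<Gamma>'' S \<subseteq> \<Gamma> S)"
    and "complete_join_hom (closed_sets \<Gamma>'') (closed_sets \<Gamma>) \<phi> \<and> (\<forall>p. \<phi> (down p) = down p)"
  then show "finite_meet_preserving (closed_sets \<Gamma>'') (closed_sets \<Gamma>) \<phi>"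
    using finite_meet_preserving_if_frame[OF assms(1)] by blast
next
  assume "\<forall>\<Gamma>''. standard_closure \<Gamma>'' \<and> (\<forall>S. \<Gamma>'' S \<subseteq> \<Gamma> S) \<longrightarrow>
    (\<forall>\<phi>. complete_join_hom (closed_sets \<Gamma>'') (closed_sets \<Gamma>) \<phi> \<and> (\<forall>p. \<phi> (down p) = down p)
         \<longrightarrow> finite_meet_preserving (closed_sets \<Gamma>'') (closed_sets \<Gamma>) \<phi>)"
  then have "finite_meet_preserving (closed_sets down_closure) (closed_sets \<Gamma>) \<Gamma>"
    using standard_closure_down_closure down_closure_le[OF assms(1)]
      complete_join_hom_down_closure[OF assms(1)] closure_down[OF assms(1)] by blast
  then show "is_frame (closed_sets \<Gamma>)"
    by (rule frame_if_finite_meet_preserving_down_closure[OF assms(1)])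
qed

end
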